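(* Let $v>0$, $N\ge1$, and consider the coagulation process $CP(N)$ with single-coagulation rates $\psi(i,j)=(i+j)v$, started from the state $(N,0,\dots,0)$ (total dissipation). Then for all $t\ge0$, $1\le r\le N$ and $\eta=(n_1,\dots,n_N)\in\Omega_{r,N}$, $$\mathbb P(X_N^{(\rho)}(t)=\eta)=N!\,e^{-N(r-1)vt}\big(1-e^{-Nvt}\big)^{N-r}N^{-(N-r)}\prod_{k=1}^N\frac{k^{(k-1)n_k}}{(k!)^{n_k}n_k!}.$$ Equivalently, the distribution is Gibbsian with $C_N=N!$ and weights $a_{k,N}(t)=e^{-(N-k)vt}(1-e^{-Nvt})^{k-1}N^{-(k-1)}\frac{k^{k-1}}{k!}$.
   Context: $\Omega_N=\{\eta=(n_1,\dots,n_N):\sum_k kn_k=N\}$ and $\Omega_{r,N}=\{\eta\in\Omega_N:n_1+\dots+n_N=r\}$. $CP(N)$ is the continuous-time Markov chain on $\Omega_N$ in which any cluster of size $i$ and any other cluster of size $j$ merge into a cluster of size $i+j$ at rate $\psi(i,j)$; thus the transition $\eta\to\eta^{(i,j)}$ has rate $n_in_j\psi(i,j)$ for $i\ne j$ and $\frac{n_i(n_i-1)}2\psi(i,i)$ for $i=j$. $X_N^{(\rho)}(t)$ denotes the process at time $t$, $\rho$ the initial distribution (here the point mass at $(N,0,\dots,0)$). *)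

theory Defs
  imports "HOL-Analysis.Analysis"
begin

text \<open>States: eta :: nat => nat, eta k = n_k = number of clusters of size k.\<close>

definition Omega :: "nat \<Rightarrow> (nat \<Rightarrow> nat) set" where
  "Omega N = {\<eta>. (\<forall>k. \<eta> k \<noteq> 0 \<longrightarrow> 1 \<le> k \<and> k \<le> N) \<and> (\<Sum>k=1..N. k * \<eta> k) = N}"

definition Omega_r :: "nat \<Rightarrow> nat \<Rightarrow> (nat \<Rightarrow> nat) set" where
  "Omega_r r N = {\<eta> \<in> Omega N. (\<Sum>k=1..N. \<eta> k) = r}"

definition merge :: "(nat \<Rightarrow> nat) \<Rightarrow> nat \<Rightarrow> nat \<Rightarrow> (nat \<Rightarrow> nat)" where
  "merge \<eta> i j = (\<lambda>k. if k = i + j then \<eta> k + 1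
                        else if k = i \<and> k = j then \<eta> k - 2
                        else if k = i \<or> k = j then \<eta> k - 1
                        else \<eta> k)"

definition pair_rate :: "(nat \<Rightarrow> nat \<Rightarrow> real) \<Rightarrow> (nat \<Rightarrow> nat) \<Rightarrow> nat \<Rightarrow> nat \<Rightarrow> real" where
  "pair_rate \<psi> \<eta> i j =
     (if i = j then real (\<eta> i * (\<eta> i - 1)) / 2 * \<psi> i i
      else real (\<eta> i * \<eta> j) * \<psi> i j)"

definition size_pairs :: "nat \<Rightarrow> (nat \<times> nat) set" where
  "size_pairs N = {(i, j). 1 \<le> i \<and> i \<le> j \<and> i + j \<le> N}"

definition jump_rate :: "(nat \<Rightarrow> nat \<Rightarrow> real) \<Rightarrow> nat \<Rightarrow> (nat \<Rightarrow> nat) \<Rightarrow> (nat \<Rightarrow> nat) \<Rightarrow> real" where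
  "jump_rate \<psi> N \<xi> \<eta> =
     (\<Sum>(i, j)\<in>size_pairs N. if merge \<xi> i j = \<eta> then pair_rate \<psi> \<xi> i j else 0)"

definition generator :: "(nat \<Rightarrow> nat \<Rightarrow> real) \<Rightarrow> nat \<Rightarrow> (nat \<Rightarrow> nat) \<Rightarrow> (nat \<Rightarrow> nat) \<Rightarrow> real" where
  "generator \<psi> N \<xi> \<eta> =
     (if \<xi> = \<eta> then - (\<Sum>\<zeta>\<in>Omega N - {\<xi>}. jump_rate \<psi> N \<xi> \<zeta>)
      else jump_rate \<psi> N \<xi> \<eta>)"

text \<open>p t eta = P(X(t) = eta) for the chain started from the point mass rho at eta0:
  p is characterised as the solution of the Kolmogorov forward equations.\<close>
definition is_law :: "(nat \<Rightarrow> nat \<Rightarrow> real) \<Rightarrow> nat \<Rightarrow> (nat \<Rightarrow> nat) \<Rightarrow> (real \<Rightarrow> (nat \<Rightarrow> nat) \<Rightarrow> real) \<Rightarrow> bool" where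
  "is_law \<psi> N \<eta>0 p \<longleftrightarrow>
     (\<forall>\<eta>\<in>Omega N. p 0 \<eta> = (if \<eta> = \<eta>0 then 1 else 0)) \<and>
     (\<forall>\<eta>\<in>Omega N. \<forall>t\<ge>0.
        ((\<lambda>s. p s \<eta>) has_real_derivative (\<Sum>\<xi>\<in>Omega N. p t \<xi> * generator \<psi> N \<xi> \<eta>))
          (at t within {0..}))"

definition monodisperse :: "nat \<Rightarrow> nat \<Rightarrow> nat" where
  "monodisperse N = (\<lambda>k. if k = 1 then N else 0)"

end

theory Submission
  imports Defs
begin

text \<open>
  The law \<open>p\<close> of the process is characterised by the Kolmogorov forward equations
  \<open>p' = p Q\<close> on the finite state space \<open>Omega N\<close> and the initial point mass, so it
  suffices to exhibit one solution and to prove uniqueness.  The candidate is the Gibbs law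
  \<open>F\<^sub>r(t) W(\<eta>)\<close>, where \<open>r\<close> is the number of clusters of \<open>\<eta>\<close>,
  \<open>W(\<eta>) = \<Prod>k. a\<^sub>k^\<eta>\<^sub>k / \<eta>\<^sub>k!\<close> with tree weights \<open>a\<^sub>k = k^(k-1) / k!\<close>, and \<open>F\<^sub>r\<close> is the
  explicit time factor of the statement.
\<close>

lemma alternating_binomial_sum_Suc:
  fixes f :: "nat \<Rightarrow> real"
  shows "(\<Sum>i\<le>Suc n. (-1)^i * real (Suc n choose i) * f i)
       = (\<Sum>i\<le>n. (-1)^i * real (n choose i) * (f i - f (Suc i)))"
proof -
  have pascal: "(\<Sum>i\<le>Suc n. (-1)^i * real (Suc n choose i) * f i)
      = (\<Sum>i\<le>n. (-1)^Suc i * real (n choose i) * f (Suc i))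
        + (f 0 + (\<Sum>i\<le>n. (-1)^Suc i * real (n choose Suc i) * f (Suc i)))"
    by (subst sum.atMost_Suc_shift) (simp add: algebra_simps flip: sum.distrib)
  have shift: "f 0 + (\<Sum>i\<le>n. (-1)^Suc i * real (n choose Suc i) * f (Suc i))
      = (\<Sum>i\<le>n. (-1)^i * real (n choose i) * f i)"
  proof -
    have "(\<Sum>i\<le>n. (-1)^i * real (n choose i) * f i) = (\<Sum>i\<le>Suc n. (-1)^i * real (n choose i) * f i)"
      by simp
    also have "\<dots> = f 0 + (\<Sum>i\<le>n. (-1)^Suc i * real (n choose Suc i) * f (Suc i))"
      by (subst sum.atMost_Suc_shift) simp
    finally show ?thesis ..
  qed
  show ?thesis
    unfolding pascal shift by (simp add: sum_subtractf[symmetric] algebra_simps flip: sum.distrib)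
qed

lemma alternating_binomial_power_sum:
  "m < n \<Longrightarrow> (\<Sum>i\<le>n. (-1)^i * real (n choose i) * real i ^ m) = 0"
proof (induction n arbitrary: m)
  case 0 then show ?case by simp
next
  case (Suc n)
  have diff: "real i ^ m - real (Suc i) ^ m = - (\<Sum>l<m. real (m choose l) * real i ^ l)" for i
  proof -
    have "real (Suc i) ^ m = (\<Sum>l\<le>m. real (m choose l) * real i ^ l)"
      using binomial_ring[of "real i" 1 m] by (simp add: add.commute)
    then show ?thesis by (simp add: lessThan_Suc_atMost[symmetric])
  qed
  have "(\<Sum>i\<le>Suc n. (-1)^i * real (Suc n choose i) * real i ^ m)
      = - (\<Sum>l<m. real (m choose l) * (\<Sum>i\<le>n. (-1)^i * real (n choose i) * real i ^ l))"
    unfolding alternating_binomial_sum_Suc diff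
    by (simp add: sum_distrib_left sum_negf algebra_simps sum.swap[of _ "{..<m}"])
  also have "\<dots> = 0"
    using Suc by (simp add: Suc.IH)
  finally show ?case .
qed

definition abel_sum :: "nat \<Rightarrow> real \<Rightarrow> real" where
  "abel_sum n y = (\<Sum>i=1..n. real (n choose i) * real i ^ (i - 1) * (y + real n - real i) ^ (n - i))"

lemma abel_sum_derivative:
  assumes "n \<ge> 1"
  shows "(abel_sum (Suc n) has_real_derivative real (Suc n) * abel_sum n (y + 1)) (at y)"
proof -
  have summand: "real (Suc n choose i) * real i ^ (i - 1)
                * (real (Suc n - i) * (y + real (Suc n) - real i) ^ (Suc n - i - 1))
            = real (Suc n) * (real (n choose i) * real i ^ (i - 1) * ((y + 1) + real n - real i) ^ (n - i))"
    for i
  proof -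
    have absorb: "real (Suc n - i) * real (Suc n choose i) = real (Suc n) * real (n choose i)"
      using binomial_absorb_comp[of "Suc n" i] by (metis diff_Suc_1 of_nat_mult)
    have "y + real (Suc n) - real i = (y + 1) + real n - real i" "Suc n - i - 1 = n - i"
      by simp_all
    then have "real (Suc n choose i) * real i ^ (i - 1)
                * (real (Suc n - i) * (y + real (Suc n) - real i) ^ (Suc n - i - 1))
        = (real (Suc n - i) * real (Suc n choose i)) * (real i ^ (i - 1) * ((y + 1) + real n - real i) ^ (n - i))"
      by (simp only: mult_ac)
    then show ?thesis unfolding absorb by (simp only: mult_ac)
  qed
  have "(\<Sum>i=1..Suc n. real (Suc n choose i) * real i ^ (i - 1)
        * (real (Suc n - i) * (y + real (Suc n) - real i) ^ (Suc n - i - 1)))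
      = (\<Sum>i=1..n. real (Suc n choose i) * real i ^ (i - 1)
        * (real (Suc n - i) * (y + real (Suc n) - real i) ^ (Suc n - i - 1)))"
    by (simp add: sum.cl_ivl_Suc)
  also have "\<dots> = (\<Sum>i=1..n. real (Suc n)
        * (real (n choose i) * real i ^ (i - 1) * ((y + 1) + real n - real i) ^ (n - i)))"
    by (rule sum.cong[OF refl]) (rule summand)
  also have "\<dots> = real (Suc n) * abel_sum n (y + 1)"
    by (simp add: abel_sum_def sum_distrib_left)
  finally have derivative_value: "(\<Sum>i=1..Suc n. real (Suc n choose i) * real i ^ (i - 1)
        * (real (Suc n - i) * (y + real (Suc n) - real i) ^ (Suc n - i - 1)))
      = real (Suc n) * abel_sum n (y + 1)" .
  show ?thesis
    unfolding abel_sum_def[of "Suc n"] derivative_value[symmetric]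
    by (rule DERIV_sum) (auto intro!: derivative_eq_intros)
qed

text \<open>At \<open>y = -m\<close> the Abel sum is an alternating binomial sum of the polynomial
  \<open>i^(m-1)\<close>, hence vanishes for \<open>m \<ge> 2\<close>.\<close>
lemma abel_sum_at_minus:
  assumes "m \<ge> 2"
  shows "abel_sum m (- real m) = 0"
proof -
  have summand: "real (m choose i) * real i ^ (i - 1) * (- real m + real m - real i) ^ (m - i)
      = (-1)^m * ((-1)^i * real (m choose i) * real i ^ (m - 1))" if "1 \<le> i" "i \<le> m" for i
  proof -
    obtain d where m: "m = i + d" using \<open>i \<le> m\<close> le_iff_add by blast
    have pow: "real i ^ (i - 1) * real i ^ d = real i ^ (m - 1)"
      using \<open>1 \<le> i\<close> by (simp add: m power_add[symmetric])
    have sign: "(-1::real)^m * (-1)^i = (-1)^d"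
      unfolding m power_add by (simp add: mult.commute)
    have "real (m choose i) * real i ^ (i - 1) * (- real m + real m - real i) ^ (m - i)
        = (-1)^d * real (m choose i) * (real i ^ (i - 1) * real i ^ d)"
      unfolding m by (simp add: power_minus[of "real i"])
    then show ?thesis
      unfolding pow sign[symmetric] by simp
  qed
  have "abel_sum m (- real m) = (-1)^m * (\<Sum>i=1..m. (-1)^i * real (m choose i) * real i ^ (m - 1))"
    unfolding abel_sum_def sum_distrib_left by (rule sum.cong[OF refl], rule summand) auto
  also have "(\<Sum>i=1..m. (-1)^i * real (m choose i) * real i ^ (m - 1))
      = (\<Sum>i\<le>m. (-1)^i * real (m choose i) * real i ^ (m - 1))"
    using assms by (simp add: atMost_atLeast0 sum.atLeast_Suc_atMost)
  also have "\<dots> = 0"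
    using assms by (intro alternating_binomial_power_sum) simp
  finally show ?thesis by simp
qed

text \<open>Abel's identity
  \<open>\<Sum>i=1..n. (n choose i) i^(i-1) (y+n-i)^(n-i) = n (y+n)^(n-1)\<close>, by induction on \<open>n\<close>:
  both sides have the same derivative in \<open>y\<close> and agree at \<open>y = -n\<close>.\<close>
lemma abel_identity: "n \<ge> 1 \<Longrightarrow> abel_sum n y = real n * (y + real n) ^ (n - 1)"
proof (induction n arbitrary: y rule: dec_induct)
  case base then show ?case by (simp add: abel_sum_def)
next
  case (step n)
  let ?h = "\<lambda>y. abel_sum (Suc n) y - real (Suc n) * (y + real (Suc n)) ^ n"
  have "(?h has_real_derivative
      real (Suc n) * abel_sum n (z + 1) - real (Suc n) * (real n * (z + real (Suc n)) ^ (n - 1))) (at z)" for z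
    using abel_sum_derivative[OF step.hyps(1), of z] by (auto intro!: derivative_eq_intros)
  moreover have "real (Suc n) * abel_sum n (z + 1) - real (Suc n) * (real n * (z + real (Suc n)) ^ (n - 1)) = 0" for z
    using step.IH[of "z + 1"] by (simp add: algebra_simps)
  ultimately have "?h y = ?h (- real (Suc n))"
    by (intro DERIV_isconst_all) auto
  also have "\<dots> = 0"
    using abel_sum_at_minus[of "Suc n"] step.hyps by simp
  finally show ?case by simp
qed

lemma abel_identity_at_zero:
  assumes k: "k \<ge> 1"
  shows "(\<Sum>i=1..k-1. real (k choose i) * real i ^ (i - 1) * real (k - i) ^ (k - i))
       = real (k - 1) * real k ^ (k - 1)"
proof -
  have "abel_sum k 0 = (\<Sum>i=1..k. real (k choose i) * real i ^ (i - 1) * real (k - i) ^ (k - i))"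
    unfolding abel_sum_def by (intro sum.cong refl) (simp add: of_nat_diff)
  also have "\<dots> = (\<Sum>i=1..k-1. real (k choose i) * real i ^ (i - 1) * real (k - i) ^ (k - i))
                    + real k ^ (k - 1)"
    using k by (cases k) (simp_all add: sum.cl_ivl_Suc)
  finally show ?thesis
    using abel_identity[OF k, of 0] k by (simp add: of_nat_diff algebra_simps)
qed

text \<open>The convolution identity behind Cayley's formula,
  \<open>k \<Sum>i=1..k-1. (k choose i) i^(i-1) (k-i)^(k-i-1) = 2 (k-1) k^(k-1)\<close>: Abel's identity
  at \<open>y = 0\<close> gives the sum weighted by \<open>k - i\<close>, and the symmetry \<open>i \<leftrightarrow> k - i\<close> the sum
  weighted by \<open>i\<close>.\<close>
lemma rooted_forest_convolution:
  assumes k: "k \<ge> 1"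
  shows "real k * (\<Sum>i=1..k-1. real (k choose i) * real i ^ (i - 1) * real (k - i) ^ (k - i - 1))
       = 2 * real (k - 1) * real k ^ (k - 1)"
proof -
  define c where "c i = real (k choose i) * real i ^ (i - 1) * real (k - i) ^ (k - i - 1)" for i
  have weighted: "(\<Sum>i=1..k-1. c i * real (k - i)) = real (k - 1) * real k ^ (k - 1)"
    unfolding abel_identity_at_zero[OF k, symmetric]
  proof (rule sum.cong[OF refl])
    fix i assume "i \<in> {1..k-1}"
    then have "k - i = Suc (k - i - 1)" by auto
    then have "real (k - i) ^ (k - i) = real (k - i) ^ (k - i - 1) * real (k - i)"
      by (metis power_Suc2)
    then show "c i * real (k - i) = real (k choose i) * real i ^ (i - 1) * real (k - i) ^ (k - i)"
      by (simp add: c_def)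
  qed
  have symmetric: "(\<Sum>i=1..k-1. c i * real (k - i)) = (\<Sum>i=1..k-1. c i * real i)"
  proof -
    have csym: "c (k - i) = c i" if "i \<le> k" for i
      using that binomial_symmetric[of i k] unfolding c_def by (auto simp: mult_ac)
    have "(\<Sum>i=1..k-1. c i * real (k - i)) = (\<Sum>i=1..k-1. c (k - i) * real (k - (k - i)))"
      using sum.atLeastAtMost_rev[of "\<lambda>i. c i * real (k - i)" 1 "k - 1"] k by simp
    also have "\<dots> = (\<Sum>i=1..k-1. c i * real i)"
    proof (rule sum.cong[OF refl])
      fix i assume "i \<in> {1..k-1}"
      then have "i \<le> k" "k - (k - i) = i" by auto
      then show "c (k - i) * real (k - (k - i)) = c i * real i" by (simp only: csym)
    qed
    finally show ?thesis .
  qed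
  have "(\<Sum>i=1..k-1. c i * real (k - i)) + (\<Sum>i=1..k-1. c i * real i) = (\<Sum>i=1..k-1. c i * real k)"
    unfolding sum.distrib[symmetric]
  proof (rule sum.cong[OF refl])
    fix i assume "i \<in> {1..k-1}"
    then have "real (k - i) = real k - real i" by (auto simp: of_nat_diff)
    then show "c i * real (k - i) + c i * real i = c i * real k" by (simp add: algebra_simps)
  qed
  then have "real k * (\<Sum>i=1..k-1. c i) = (\<Sum>i=1..k-1. c i * real (k - i)) + (\<Sum>i=1..k-1. c i * real i)"
    by (simp add: sum_distrib_left mult.commute)
  then show ?thesis
    unfolding c_def[symmetric] using weighted symmetric by simp
qed

definition tree_weight :: "nat \<Rightarrow> real" where
  "tree_weight k = real k ^ (k - 1) / fact k"

lemma tree_weight_pos: "k \<ge> 1 \<Longrightarrow> tree_weight k > 0"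
  unfolding tree_weight_def by simp

lemma tree_weight_convolution:
  assumes k: "k \<ge> 1"
  shows "(\<Sum>i=1..k-1. tree_weight i * tree_weight (k - i)) = 2 * real (k - 1) * tree_weight k / real k"
proof -
  have "(\<Sum>i=1..k-1. tree_weight i * tree_weight (k - i))
      = (\<Sum>i=1..k-1. real (k choose i) * real i ^ (i - 1) * real (k - i) ^ (k - i - 1)) / fact k"
    unfolding sum_divide_distrib
    by (intro sum.cong refl) (auto simp: tree_weight_def binomial_fact field_simps)
  also have "\<dots> = 2 * real (k - 1) * real k ^ (k - 1) / (real k * fact k)"
    using rooted_forest_convolution[OF k] k by (simp add: field_simps)
  also have "\<dots> = 2 * real (k - 1) * tree_weight k / real k"
    by (simp add: tree_weight_def)
  finally show ?thesis .
qed

text \<open>A Gronwall-type argument: a nonnegative function vanishing at \<open>0\<close> whose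
  right derivative is bounded by \<open>c f\<close> vanishes identically (\<open>f e\<^sup>-\<^sup>c\<^sup>t\<close> is decreasing).\<close>
lemma gronwall_zero:
  fixes f f' :: "real \<Rightarrow> real" and c T :: real
  assumes init: "f 0 = 0" and nonneg: "\<And>s. s \<ge> 0 \<Longrightarrow> f s \<ge> 0"
    and deriv: "\<And>t. t \<ge> 0 \<Longrightarrow> (f has_real_derivative f' t) (at t within {0..})"
    and growth: "\<And>t. t \<ge> 0 \<Longrightarrow> f' t \<le> c * f t"
    and T: "T \<ge> 0"
  shows "f T = 0"
proof -
  define g where "g s = f s * exp (- c * s)" for s
  define g' where "g' s = (f' s - c * f s) * exp (- c * s)" for s
  have dg: "(g has_real_derivative g' t) (at t within {0..})" if "t \<ge> 0" for t
    unfolding g_def g'_def using deriv[OF that]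
    by (auto intro!: derivative_eq_intros simp: algebra_simps)
  have "g T \<le> g 0"
  proof (rule DERIV_nonpos_imp_decreasing_open[OF T])
    fix x assume x: "0 < x" "x < T"
    have "(g has_real_derivative g' x) (at x within {0<..})"
      using dg[of x] x by (rule_tac DERIV_subset) auto
    then have "(g has_real_derivative g' x) (at x)"
      using at_within_open[of x "{0<..}"] x by simp
    moreover have "g' x \<le> 0"
      unfolding g'_def using growth[of x] x by (intro mult_nonpos_nonneg) auto
    ultimately show "\<exists>y. (g has_real_derivative y) (at x) \<and> y \<le> 0" by blast
  next
    show "continuous_on {0..T} g"
      by (rule DERIV_continuous_on[where D=g']) (rule DERIV_subset[OF dg], auto)
  qed
  then have "f T * exp (- c * T) \<le> 0"
    unfolding g_def using init by simp
  then show ?thesis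
    using nonneg[OF T] by (simp add: mult_le_0_iff)
qed

lemma quadratic_form_bound:
  fixes S :: "'a set" and G :: "'a \<Rightarrow> 'a \<Rightarrow> real" and d :: "'a \<Rightarrow> real"
  assumes "finite S"
  shows "(\<Sum>\<eta>\<in>S. 2 * d \<eta> * (\<Sum>\<xi>\<in>S. d \<xi> * G \<xi> \<eta>))
       \<le> 2 * (\<Sum>\<xi>\<in>S. \<Sum>\<eta>\<in>S. \<bar>G \<xi> \<eta>\<bar>) * (\<Sum>\<eta>\<in>S. (d \<eta>)^2)"
proof -
  define E where "E = (\<Sum>\<eta>\<in>S. (d \<eta>)^2)"
  have product: "\<bar>d \<eta> * d \<xi>\<bar> \<le> E" if "\<eta> \<in> S" "\<xi> \<in> S" for \<eta> \<xi>
  proof -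
    have "\<bar>d \<eta> * d \<xi>\<bar> \<le> ((d \<eta>)^2 + (d \<xi>)^2) / 2"
      using sum_squares_bound[of "\<bar>d \<eta>\<bar>" "\<bar>d \<xi>\<bar>"] by (simp add: abs_mult)
    also have "\<dots> \<le> E"
      using member_le_sum[of \<eta> S "\<lambda>\<eta>. (d \<eta>)^2"] member_le_sum[of \<xi> S "\<lambda>\<eta>. (d \<eta>)^2"]
        that assms unfolding E_def by simp
    finally show ?thesis .
  qed
  have "(\<Sum>\<eta>\<in>S. 2 * d \<eta> * (\<Sum>\<xi>\<in>S. d \<xi> * G \<xi> \<eta>)) = (\<Sum>\<eta>\<in>S. \<Sum>\<xi>\<in>S. 2 * (d \<eta> * d \<xi>) * G \<xi> \<eta>)"
    by (simp add: sum_distrib_left mult_ac)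
  also have "\<dots> \<le> (\<Sum>\<eta>\<in>S. \<Sum>\<xi>\<in>S. 2 * E * \<bar>G \<xi> \<eta>\<bar>)"
  proof (intro sum_mono)
    fix \<eta> \<xi> assume "\<eta> \<in> S" "\<xi> \<in> S"
    have "2 * (d \<eta> * d \<xi>) * G \<xi> \<eta> \<le> 2 * (\<bar>d \<eta> * d \<xi>\<bar> * \<bar>G \<xi> \<eta>\<bar>)"
      by (simp add: abs_le_iff abs_mult flip: abs_mult)
    also have "\<dots> \<le> 2 * (E * \<bar>G \<xi> \<eta>\<bar>)"
      using product[OF \<open>\<eta> \<in> S\<close> \<open>\<xi> \<in> S\<close>] by (intro mult_left_mono mult_right_mono) auto
    finally show "2 * (d \<eta> * d \<xi>) * G \<xi> \<eta> \<le> 2 * E * \<bar>G \<xi> \<eta>\<bar>" by (simp add: mult_ac)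
  qed
  also have "\<dots> = 2 * E * (\<Sum>\<eta>\<in>S. \<Sum>\<xi>\<in>S. \<bar>G \<xi> \<eta>\<bar>)"
    by (simp add: sum_distrib_left)
  also have "(\<Sum>\<eta>\<in>S. \<Sum>\<xi>\<in>S. \<bar>G \<xi> \<eta>\<bar>) = (\<Sum>\<xi>\<in>S. \<Sum>\<eta>\<in>S. \<bar>G \<xi> \<eta>\<bar>)"
    by (rule sum.swap)
  finally show ?thesis unfolding E_def by (simp add: mult_ac)
qed

text \<open>Uniqueness for the forward equations: two solutions of a finite linear system
  \<open>p' = p G\<close> on \<open>[0, \<infinity>)\<close> with equal initial values agree; apply Gronwall to \<open>|p - q|\<^sup>2\<close>.\<close>
lemma linear_ode_unique:
  fixes S :: "'a set" and G :: "'a \<Rightarrow> 'a \<Rightarrow> real" and p q :: "real \<Rightarrow> 'a \<Rightarrow> real"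
  assumes fin: "finite S"
    and init: "\<forall>\<eta>\<in>S. p 0 \<eta> = q 0 \<eta>"
    and dp: "\<forall>\<eta>\<in>S. \<forall>t\<ge>0. ((\<lambda>s. p s \<eta>) has_real_derivative (\<Sum>\<xi>\<in>S. p t \<xi> * G \<xi> \<eta>)) (at t within {0..})"
    and dq: "\<forall>\<eta>\<in>S. \<forall>t\<ge>0. ((\<lambda>s. q s \<eta>) has_real_derivative (\<Sum>\<xi>\<in>S. q t \<xi> * G \<xi> \<eta>)) (at t within {0..})"
  shows "\<forall>t\<ge>0. \<forall>\<eta>\<in>S. p t \<eta> = q t \<eta>"
proof (intro allI impI ballI)
  fix T :: real and \<eta>0 assume T: "T \<ge> 0" and \<eta>0: "\<eta>0 \<in> S"
  define d where "d s \<eta> = p s \<eta> - q s \<eta>" for s \<eta>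
  define f where "f s = (\<Sum>\<eta>\<in>S. (d s \<eta>)^2)" for s
  have dd: "((\<lambda>s. d s \<eta>) has_real_derivative (\<Sum>\<xi>\<in>S. d t \<xi> * G \<xi> \<eta>)) (at t within {0..})"
    if "\<eta> \<in> S" "t \<ge> 0" for \<eta> t
    using DERIV_diff[OF dp[rule_format, OF that] dq[rule_format, OF that]]
    unfolding d_def by (simp add: left_diff_distrib flip: sum_subtractf)
  have df: "(f has_real_derivative (\<Sum>\<eta>\<in>S. 2 * d t \<eta> * (\<Sum>\<xi>\<in>S. d t \<xi> * G \<xi> \<eta>))) (at t within {0..})"
    if "t \<ge> 0" for t
    unfolding f_def
  proof (rule DERIV_sum)
    fix \<eta> assume "\<eta> \<in> S"
    from DERIV_power[OF dd[OF this that], of 2]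
    show "((\<lambda>s. (d s \<eta>)^2) has_real_derivative 2 * d t \<eta> * (\<Sum>\<xi>\<in>S. d t \<xi> * G \<xi> \<eta>)) (at t within {0..})"
      by (simp add: mult_ac)
  qed
  have "f T = 0"
  proof (rule gronwall_zero[OF _ _ df _ T])
    show "f 0 = 0" unfolding f_def d_def using init by simp
    show "f s \<ge> 0" for s unfolding f_def by (intro sum_nonneg) auto
    show "(\<Sum>\<eta>\<in>S. 2 * d t \<eta> * (\<Sum>\<xi>\<in>S. d t \<xi> * G \<xi> \<eta>))
        \<le> (2 * (\<Sum>\<xi>\<in>S. \<Sum>\<eta>\<in>S. \<bar>G \<xi> \<eta>\<bar>)) * f t" for t
      unfolding f_def by (rule quadratic_form_bound[OF fin])
  qed
  moreover have "(d T \<eta>0)^2 \<le> f T"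
    unfolding f_def using fin \<eta>0 by (intro member_le_sum) auto
  ultimately have "(d T \<eta>0)^2 = 0" by simp
  then show "p T \<eta>0 = q T \<eta>0" unfolding d_def by simp
qed

lemma Omega_support: "\<eta> \<in> Omega N \<Longrightarrow> \<eta> k \<noteq> 0 \<Longrightarrow> 1 \<le> k \<and> k \<le> N"
  unfolding Omega_def by auto

lemma Omega_outside: "\<eta> \<in> Omega N \<Longrightarrow> k < 1 \<or> k > N \<Longrightarrow> \<eta> k = 0"
  using Omega_support[of \<eta> N k] by linarith

lemma Omega_mass: "\<eta> \<in> Omega N \<Longrightarrow> (\<Sum>k=1..N. k * \<eta> k) = N"
  unfolding Omega_def by auto

lemma Omega_mass_real: "\<eta> \<in> Omega N \<Longrightarrow> (\<Sum>k=1..N. real k * real (\<eta> k)) = real N"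
  using Omega_mass[of \<eta> N] by (metis (no_types, lifting) of_nat_mult of_nat_sum sum.cong)

lemma Omega_partial_mass:
  assumes "\<eta> \<in> Omega N" "A \<subseteq> {1..N}"
  shows "(\<Sum>k\<in>A. k * \<eta> k) \<le> N"
  using sum_mono2[of "{1..N}" A "\<lambda>k. k * \<eta> k"] assms Omega_mass[OF assms(1)] by auto

lemma Omega_count_bound:
  assumes "\<eta> \<in> Omega N"
  shows "\<eta> k \<le> N"
proof (cases "\<eta> k = 0")
  case False
  then have "k \<in> {1..N}" using Omega_support[OF assms] by auto
  then have "k * \<eta> k \<le> N" using Omega_partial_mass[OF assms, of "{k}"] by auto
  moreover have "\<eta> k \<le> k * \<eta> k" using \<open>k \<in> {1..N}\<close> by simp
  ultimately show ?thesis by linarith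
qed simp

lemma finite_Omega: "finite (Omega N)"
proof (rule finite_subset)
  show "Omega N \<subseteq> {f. \<forall>x. (x \<in> {..N} \<longrightarrow> f x \<in> {..N}) \<and> (x \<notin> {..N} \<longrightarrow> f x = 0)}"
  proof
    fix \<eta> assume \<eta>: "\<eta> \<in> Omega N"
    show "\<eta> \<in> {f. \<forall>x. (x \<in> {..N} \<longrightarrow> f x \<in> {..N}) \<and> (x \<notin> {..N} \<longrightarrow> f x = 0)}"
      using Omega_count_bound[OF \<eta>] Omega_outside[OF \<eta>] by auto
  qed
  show "finite {f. \<forall>x. (x \<in> {..N} \<longrightarrow> f x \<in> {..N}) \<and> (x \<notin> {..N} \<longrightarrow> f x = (0::nat))}"
    by (rule finite_set_of_finite_funs) auto
qed

definition num_clusters :: "nat \<Rightarrow> (nat \<Rightarrow> nat) \<Rightarrow> nat" where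
  "num_clusters N \<eta> = (\<Sum>k=1..N. \<eta> k)"

lemma num_clusters_le: "\<eta> \<in> Omega N \<Longrightarrow> num_clusters N \<eta> \<le> N"
  unfolding num_clusters_def using Omega_mass[of \<eta> N] sum_mono[of "{1..N}" \<eta> "\<lambda>k. k * \<eta> k"]
  by simp

lemma num_clusters_pos:
  assumes "\<eta> \<in> Omega N" "N \<ge> 1"
  shows "num_clusters N \<eta> \<ge> 1"
proof (rule ccontr)
  assume "\<not> 1 \<le> num_clusters N \<eta>"
  then have "num_clusters N \<eta> = 0" by simp
  then have "\<forall>k\<in>{1..N}. \<eta> k = 0" unfolding num_clusters_def by simp
  then show False using Omega_mass[OF assms(1)] assms(2) by simp
qed

text \<open>The monodisperse state is the only state with \<open>N\<close> clusters: the surplus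
  \<open>\<Sum>k. (k - 1) \<eta> k = N - num_clusters N \<eta>\<close> vanishes only if all clusters have size 1.\<close>
lemma num_clusters_eq_N_iff:
  assumes \<eta>: "\<eta> \<in> Omega N"
  shows "num_clusters N \<eta> = N \<longleftrightarrow> \<eta> = monodisperse N"
proof
  assume c: "num_clusters N \<eta> = N"
  have "(\<Sum>k=1..N. (k - 1) * \<eta> k) + num_clusters N \<eta> = (\<Sum>k=1..N. k * \<eta> k)"
    unfolding num_clusters_def sum.distrib[symmetric]
    by (intro sum.cong refl) (auto simp: diff_mult_distrib)
  then have "\<forall>k\<in>{1..N}. (k - 1) * \<eta> k = 0" using Omega_mass[OF \<eta>] c by simp
  then have big: "\<eta> k = 0" if "2 \<le> k" "k \<le> N" for k
    using that by (auto dest!: bspec[where x=k])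
  have "N = \<eta> 1 + (\<Sum>k=2..N. \<eta> k)"
  proof (cases "N \<ge> 1")
    case True then show ?thesis
      using c unfolding num_clusters_def by (simp add: sum.atLeast_Suc_atMost numeral_2_eq_2)
  qed (use c Omega_outside[OF \<eta>, of 1] in \<open>simp add: num_clusters_def\<close>)
  then have "\<eta> 1 = N" using big by simp
  show "\<eta> = monodisperse N"
  proof
    fix k
    consider "k = 1" | "2 \<le> k \<and> k \<le> N" | "k < 1 \<or> k > N" by linarith
    then show "\<eta> k = monodisperse N k"
      using \<open>\<eta> 1 = N\<close> big Omega_outside[OF \<eta>, of k] by cases (auto simp: monodisperse_def)
  qed
next
  assume "\<eta> = monodisperse N"
  then show "num_clusters N \<eta> = N"
    by (simp add: num_clusters_def monodisperse_def)
qed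

text \<open>Replacing a \<open>(b + c)\<close>-cluster by a \<open>b\<close>- and a \<open>c\<close>-cluster (\<open>s = -1\<close>) or the
  converse (\<open>s = 1\<close>) stays in the state space and changes the cluster count by \<open>-s\<close>.\<close>
lemma Omega_shift:
  fixes s :: int
  assumes \<xi>: "\<xi> \<in> Omega N" and bc: "b \<ge> 1" "c \<ge> 1" "b + c \<le> N"
    and \<zeta>: "\<And>k. int (\<zeta> k) = int (\<xi> k)
              + s * ((if k = b + c then 1 else 0) - (if k = b then 1 else 0) - (if k = c then 1 else 0))"
  shows "\<zeta> \<in> Omega N" "int (num_clusters N \<zeta>) = int (num_clusters N \<xi>) - s"
proof -
  have inb: "b \<in> {1..N}" "c \<in> {1..N}" "b + c \<in> {1..N}" using bc by auto
  have "int (\<Sum>k=1..N. k * \<zeta> k) = (\<Sum>k=1..N. int k * int (\<xi> k)) + s * ((\<Sum>k=1..N. int k * (if k = b + c then 1 else 0))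
        - (\<Sum>k=1..N. int k * (if k = b then 1 else 0)) - (\<Sum>k=1..N. int k * (if k = c then 1 else 0)))"
    unfolding of_nat_sum of_nat_mult \<zeta> by (simp add: algebra_simps sum.distrib sum_subtractf sum_distrib_left)
  also have "\<dots> = int (\<Sum>k=1..N. k * \<xi> k)"
    using inb by (simp add: if_distrib cong: if_cong)
  finally have mass: "(\<Sum>k=1..N. k * \<zeta> k) = N" using Omega_mass[OF \<xi>] by linarith
  have "1 \<le> k \<and> k \<le> N" if "\<zeta> k \<noteq> 0" for k
  proof (cases "k = b + c \<or> k = b \<or> k = c")
    case False
    then have "\<zeta> k = \<xi> k" using \<zeta>[of k] by simp
    then show ?thesis using that Omega_support[OF \<xi>] by auto
  qed (use inb in auto)
  then show "\<zeta> \<in> Omega N" unfolding Omega_def using mass by auto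
  have "int (num_clusters N \<zeta>) = int (num_clusters N \<xi>) + s * ((\<Sum>k=1..N. (if k = b + c then 1 else 0))
        - (\<Sum>k=1..N. (if k = b then 1 else 0)) - (\<Sum>k=1..N. (if k = c then 1 else 0)))"
    unfolding num_clusters_def of_nat_sum \<zeta> by (simp add: sum.distrib sum_subtractf sum_distrib_left[symmetric])
  also have "\<dots> = int (num_clusters N \<xi>) - s"
    using inb by simp
  finally show "int (num_clusters N \<zeta>) = int (num_clusters N \<xi>) - s" .
qed

definition unmerge :: "(nat \<Rightarrow> nat) \<Rightarrow> nat \<Rightarrow> nat \<Rightarrow> nat \<Rightarrow> nat" where
  "unmerge \<eta> i j = (\<lambda>k. if k = i + j then \<eta> k - 1
                        else if k = i \<and> k = j then \<eta> k + 2
                        else if k = i \<or> k = j then \<eta> k + 1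
                        else \<eta> k)"

definition mergeable :: "(nat \<Rightarrow> nat) \<Rightarrow> nat \<Rightarrow> nat \<Rightarrow> bool" where
  "mergeable \<xi> i j \<longleftrightarrow> \<xi> i \<ge> 1 \<and> \<xi> j \<ge> 1 \<and> (i = j \<longrightarrow> \<xi> i \<ge> 2)"

lemma size_pairsD: "(i, j) \<in> size_pairs N \<Longrightarrow> 1 \<le> i \<and> 1 \<le> j \<and> i + j \<le> N"
  unfolding size_pairs_def by auto

lemma merge_state:
  assumes "\<xi> \<in> Omega N" "(i, j) \<in> size_pairs N" "mergeable \<xi> i j"
  shows "merge \<xi> i j \<in> Omega N" "num_clusters N (merge \<xi> i j) + 1 = num_clusters N \<xi>"
proof -
  have ij: "1 \<le> i" "1 \<le> j" "i + j \<le> N" using size_pairsD[OF assms(2)] by auto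
  have "int (merge \<xi> i j k) = int (\<xi> k)
          + 1 * ((if k = i + j then 1 else 0) - (if k = i then 1 else 0) - (if k = j then 1 else 0))" for k
    using ij assms(3) unfolding merge_def mergeable_def by auto
  from Omega_shift[OF assms(1) ij this]
  show "merge \<xi> i j \<in> Omega N" "num_clusters N (merge \<xi> i j) + 1 = num_clusters N \<xi>" by auto
qed

lemma unmerge_state:
  assumes "\<eta> \<in> Omega N" "(i, j) \<in> size_pairs N" "\<eta> (i + j) \<ge> 1"
  shows "unmerge \<eta> i j \<in> Omega N" "num_clusters N (unmerge \<eta> i j) = num_clusters N \<eta> + 1"
proof -
  have ij: "1 \<le> i" "1 \<le> j" "i + j \<le> N" using size_pairsD[OF assms(2)] by auto
  have "int (unmerge \<eta> i j k) = int (\<eta> k)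
          + (-1) * ((if k = i + j then 1 else 0) - (if k = i then 1 else 0) - (if k = j then 1 else 0))" for k
    using ij assms(3) unfolding unmerge_def by auto
  from Omega_shift[OF assms(1) ij this]
  show "unmerge \<eta> i j \<in> Omega N" "num_clusters N (unmerge \<eta> i j) = num_clusters N \<eta> + 1" by auto
qed

lemma merge_unmerge: "1 \<le> i \<Longrightarrow> 1 \<le> j \<Longrightarrow> 1 \<le> \<eta> (i + j) \<Longrightarrow> merge (unmerge \<eta> i j) i j = \<eta>"
  unfolding merge_def unmerge_def by (auto simp: fun_eq_iff)

lemma unmerge_merge: "1 \<le> i \<Longrightarrow> 1 \<le> j \<Longrightarrow> mergeable \<xi> i j \<Longrightarrow> unmerge (merge \<xi> i j) i j = \<xi>"
  unfolding merge_def unmerge_def mergeable_def by (auto simp: fun_eq_iff)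

lemma pair_rate_nonzero_mergeable: "pair_rate \<psi> \<xi> i j \<noteq> 0 \<Longrightarrow> mergeable \<xi> i j"
  unfolding pair_rate_def mergeable_def by (auto split: if_splits)

lemma mergeable_size_bound:
  assumes \<xi>: "\<xi> \<in> Omega N" and "mergeable \<xi> i j"
  shows "i + j \<le> N"
proof -
  have ij: "i \<in> {1..N}" "j \<in> {1..N}"
    using assms Omega_support[OF \<xi>] unfolding mergeable_def by auto
  show ?thesis
  proof (cases "i = j")
    case True
    then have "i * 2 \<le> i * \<xi> i" using assms unfolding mergeable_def by simp
    moreover have "i * \<xi> i \<le> N" using Omega_partial_mass[OF \<xi>, of "{i}"] ij by simp
    ultimately show ?thesis using True by linarith
  next
    case False
    then have "i * 1 + j * 1 \<le> i * \<xi> i + j * \<xi> j"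
      using assms unfolding mergeable_def by (intro add_mono mult_le_mono) auto
    then show ?thesis using Omega_partial_mass[OF \<xi>, of "{i, j}"] ij False by simp
  qed
qed

lemma total_jump_rate:
  assumes \<xi>: "\<xi> \<in> Omega N"
  shows "(\<Sum>\<zeta>\<in>Omega N - {\<xi>}. jump_rate \<psi> N \<xi> \<zeta>) = (\<Sum>(i, j)\<in>size_pairs N. pair_rate \<psi> \<xi> i j)"
proof -
  have "(\<Sum>\<zeta>\<in>Omega N - {\<xi>}. if merge \<xi> i j = \<zeta> then pair_rate \<psi> \<xi> i j else 0) = pair_rate \<psi> \<xi> i j"
    if ij: "(i, j) \<in> size_pairs N" for i j
  proof (cases "pair_rate \<psi> \<xi> i j = 0")
    case False
    then have "mergeable \<xi> i j" by (rule pair_rate_nonzero_mergeable)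
    from merge_state[OF \<xi> ij this] have "merge \<xi> i j \<in> Omega N - {\<xi>}" by auto
    then show ?thesis using finite_Omega by simp
  qed (simp add: sum.neutral)
  then show ?thesis
    unfolding jump_rate_def by (subst sum.swap) (auto intro!: sum.cong)
qed

lemma inflow:
  assumes \<eta>: "\<eta> \<in> Omega N"
  shows "(\<Sum>\<xi>\<in>Omega N - {\<eta>}. f \<xi> * jump_rate \<psi> N \<xi> \<eta>)
       = (\<Sum>(i, j)\<in>size_pairs N. if \<eta> (i + j) \<ge> 1 then f (unmerge \<eta> i j) * pair_rate \<psi> (unmerge \<eta> i j) i j else 0)"
proof -
  have "(\<Sum>\<xi>\<in>Omega N - {\<eta>}. f \<xi> * (if merge \<xi> i j = \<eta> then pair_rate \<psi> \<xi> i j else 0))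
      = (if \<eta> (i + j) \<ge> 1 then f (unmerge \<eta> i j) * pair_rate \<psi> (unmerge \<eta> i j) i j else 0)"
    if ij: "(i, j) \<in> size_pairs N" for i j
  proof -
    have i1j1: "1 \<le> i" "1 \<le> j" using size_pairsD[OF ij] by auto
    have single: "f \<xi> * (if merge \<xi> i j = \<eta> then pair_rate \<psi> \<xi> i j else 0)
        = (if \<xi> = unmerge \<eta> i j \<and> \<eta> (i + j) \<ge> 1 then f \<xi> * pair_rate \<psi> \<xi> i j else 0)" for \<xi>
    proof (cases "merge \<xi> i j = \<eta> \<and> pair_rate \<psi> \<xi> i j \<noteq> 0")
      case True
      then have "mergeable \<xi> i j" using pair_rate_nonzero_mergeable by blast
      then have "unmerge \<eta> i j = \<xi>" using unmerge_merge[OF i1j1] True by blast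
      moreover have "\<eta> (i + j) \<ge> 1" using True by (auto simp: merge_def)
      ultimately show ?thesis using True by auto
    next
      case False
      then show ?thesis using merge_unmerge[OF i1j1] by auto
    qed
    show ?thesis
    proof (cases "\<eta> (i + j) \<ge> 1")
      case True
      from unmerge_state[OF \<eta> ij True] have "unmerge \<eta> i j \<in> Omega N - {\<eta>}" by auto
      then show ?thesis unfolding single using finite_Omega True by (simp add: sum.delta')
    qed (simp add: single)
  qed
  then show ?thesis
    unfolding jump_rate_def sum_distrib_left by (subst sum.swap) (auto intro!: sum.cong)
qed

lemma forward_sum:
  assumes \<eta>: "\<eta> \<in> Omega N"
  shows "(\<Sum>\<xi>\<in>Omega N. f \<xi> * generator \<psi> N \<xi> \<eta>)
       = - f \<eta> * (\<Sum>(i, j)\<in>size_pairs N. pair_rate \<psi> \<eta> i j)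
         + (\<Sum>(i, j)\<in>size_pairs N. if \<eta> (i + j) \<ge> 1 then f (unmerge \<eta> i j) * pair_rate \<psi> (unmerge \<eta> i j) i j else 0)"
proof -
  have "(\<Sum>\<xi>\<in>Omega N. f \<xi> * generator \<psi> N \<xi> \<eta>)
      = f \<eta> * generator \<psi> N \<eta> \<eta> + (\<Sum>\<xi>\<in>Omega N - {\<eta>}. f \<xi> * jump_rate \<psi> N \<xi> \<eta>)"
    by (subst sum.remove[OF finite_Omega \<eta>]) (auto simp: generator_def intro!: sum.cong)
  then show ?thesis
    unfolding inflow[OF \<eta>] using total_jump_rate[OF \<eta>] by (simp add: generator_def)
qed

lemma sum_size_pairs_symmetric:
  fixes G :: "nat \<Rightarrow> nat \<Rightarrow> real"
  assumes sym: "\<And>i j. G i j = G j i" and vanish: "\<And>i j. N < i + j \<Longrightarrow> G i j = 0"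
  shows "(\<Sum>(i, j)\<in>size_pairs N. if i = j then G i j / 2 else G i j) = (\<Sum>i=1..N. \<Sum>j=1..N. G i j) / 2"
proof -
  have support: "i + j \<le> N" if "G i j \<noteq> 0" for i j using vanish[of i j] that by linarith
  define F where "F i j = (if i = j then G i j / 2 else G i j)" for i j
  have "(\<Sum>(i, j)\<in>size_pairs N. F i j) = (\<Sum>(i, j)\<in>{1..N}\<times>{1..N}. if i \<le> j then F i j else 0)"
    by (rule sum.mono_neutral_cong_left)
       (auto simp: size_pairs_def F_def support split: if_splits)
  also have "\<dots> = (\<Sum>i=1..N. \<Sum>j=1..N. if i \<le> j then F i j else 0)"
    by (simp add: sum.cartesian_product)
  finally have upper: "(\<Sum>(i, j)\<in>size_pairs N. F i j) = (\<Sum>i=1..N. \<Sum>j=1..N. if i \<le> j then F i j else 0)" .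
  have lower: "(\<Sum>i=1..N. \<Sum>j=1..N. if j < i then G i j else 0) = (\<Sum>i=1..N. \<Sum>j=1..N. if i < j then G i j else 0)"
  proof -
    have "(\<Sum>j=1..N. \<Sum>i=1..N. if j < i then G i j else 0) = (\<Sum>j=1..N. \<Sum>i=1..N. if j < i then G j i else 0)"
      using sym by (intro sum.cong refl) presburger
    then show ?thesis by (subst sum.swap) simp
  qed
  have "(\<Sum>i=1..N. \<Sum>j=1..N. G i j)
      = (\<Sum>i=1..N. \<Sum>j=1..N. (if i \<le> j then G i j else 0) + (if j < i then G i j else 0))"
    by (intro sum.cong refl) auto
  also have "\<dots> = (\<Sum>i=1..N. \<Sum>j=1..N. (if i \<le> j then G i j else 0) + (if i < j then G i j else 0))"
    unfolding sum.distrib lower ..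
  also have "\<dots> = 2 * (\<Sum>i=1..N. \<Sum>j=1..N. if i \<le> j then F i j else 0)"
    unfolding sum_distrib_left by (intro sum.cong refl) (auto simp: F_def)
  finally show ?thesis using upper unfolding F_def by simp
qed

lemma sum_by_total_size:
  fixes G :: "nat \<Rightarrow> nat \<Rightarrow> real"
  assumes vanish: "\<And>i j. N < i + j \<Longrightarrow> G i j = 0"
  shows "(\<Sum>i=1..N. \<Sum>j=1..N. G i j) = (\<Sum>k=1..N. \<Sum>i=1..k-1. G i (k - i))"
proof -
  define T where "T = {(i, j). 1 \<le> i \<and> 1 \<le> j \<and> i + j \<le> N}"
  have "(\<Sum>i=1..N. \<Sum>j=1..N. G i j) = (\<Sum>(i, j)\<in>{1..N}\<times>{1..N}. G i j)"
    by (simp add: sum.cartesian_product)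
  also have "\<dots> = (\<Sum>(i, j)\<in>T. G i j)"
    using vanish by (intro sum.mono_neutral_right) (auto simp: T_def not_le[symmetric])
  also have "\<dots> = (\<Sum>(k, i)\<in>Sigma {1..N} (\<lambda>k. {1..k-1}). G i (k - i))"
    by (rule sum.reindex_bij_witness[where j="\<lambda>(i, j). (i + j, i)" and i="\<lambda>(k, i). (i, k - i)"])
       (auto simp: T_def)
  also have "\<dots> = (\<Sum>k=1..N. \<Sum>i=1..k-1. G i (k - i))"
    by (simp add: sum.Sigma)
  finally show ?thesis .
qed

text \<open>Under the additive kernel, the total merger rate out of a state with \<open>r\<close> clusters
  is \<open>v N (r - 1)\<close>: summing \<open>(i + j) v\<close> over ordered pairs of distinct clusters gives
  \<open>2 v N r\<close>, minus the diagonal contribution \<open>2 v N\<close>, halved.\<close>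
lemma total_pair_rate_additive:
  assumes \<xi>: "\<xi> \<in> Omega N"
  shows "(\<Sum>(i, j)\<in>size_pairs N. pair_rate (\<lambda>i j. real (i + j) * v) \<xi> i j)
       = v * real N * (real (num_clusters N \<xi>) - 1)"
proof -
  define G where "G i j = v * (real (\<xi> i) * real (\<xi> j) * real (i + j))
                            - v * (if i = j then 2 * real i * real (\<xi> i) else 0)" for i j
  have pairs: "pair_rate (\<lambda>i j. real (i + j) * v) \<xi> i j = (if i = j then G i j / 2 else G i j)" for i j
    by (cases "\<xi> i") (auto simp: pair_rate_def G_def algebra_simps)
  have vanish: "G i j = 0" if "N < i + j" for i j
  proof (rule ccontr)
    assume "G i j \<noteq> 0"
    then have "pair_rate (\<lambda>i j. real (i + j) * v) \<xi> i j \<noteq> 0"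
      unfolding pairs by auto
    then have "mergeable \<xi> i j" by (rule pair_rate_nonzero_mergeable)
    then show False using mergeable_size_bound[OF \<xi>] that by fastforce
  qed
  have ordered_pairs: "(\<Sum>i=1..N. \<Sum>j=1..N. real (\<xi> i) * real (\<xi> j) * real (i + j))
      = (\<Sum>i=1..N. real i * real (\<xi> i)) * (\<Sum>j=1..N. real (\<xi> j))
        + (\<Sum>i=1..N. real (\<xi> i)) * (\<Sum>j=1..N. real j * real (\<xi> j))"
    unfolding sum_product sum.distrib[symmetric] by (intro sum.cong refl) (simp add: algebra_simps)
  have diagonal: "(\<Sum>i=1..N. \<Sum>j=1..N. if i = j then 2 * real i * real (\<xi> i) else 0)
      = 2 * (\<Sum>i=1..N. real i * real (\<xi> i))"
    by (simp add: sum_distrib_left mult.assoc)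
  have "(\<Sum>i=1..N. \<Sum>j=1..N. G i j)
      = v * (\<Sum>i=1..N. \<Sum>j=1..N. real (\<xi> i) * real (\<xi> j) * real (i + j))
        - v * (\<Sum>i=1..N. \<Sum>j=1..N. if i = j then 2 * real i * real (\<xi> i) else 0)"
    unfolding G_def by (simp only: sum_subtractf sum_distrib_left)
  also have "\<dots> = 2 * (v * real N * (real (num_clusters N \<xi>) - 1))"
    unfolding ordered_pairs diagonal Omega_mass_real[OF \<xi>] num_clusters_def by (simp add: algebra_simps)
  finally have "(\<Sum>i=1..N. \<Sum>j=1..N. G i j) = 2 * (v * real N * (real (num_clusters N \<xi>) - 1))" .
  moreover have "G i j = G j i" for i j
    unfolding G_def by (simp add: algebra_simps)
  ultimately show ?thesis
    unfolding pairs by (subst sum_size_pairs_symmetric[of G, OF _ vanish]) simp_all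
qed

definition gibbs_factor :: "(nat \<Rightarrow> nat) \<Rightarrow> nat \<Rightarrow> real" where
  "gibbs_factor \<eta> m = tree_weight m ^ \<eta> m / fact (\<eta> m)"

definition gibbs_weight :: "nat \<Rightarrow> (nat \<Rightarrow> nat) \<Rightarrow> real" where
  "gibbs_weight N \<eta> = (\<Prod>m=1..N. gibbs_factor \<eta> m)"

lemma gibbs_factor_up:
  "\<zeta> m = \<eta> m + 1 \<Longrightarrow> gibbs_factor \<zeta> m = tree_weight m / (real (\<eta> m) + 1) * gibbs_factor \<eta> m"
  unfolding gibbs_factor_def by (simp add: field_simps)

lemma gibbs_factor_up2:
  "\<zeta> m = \<eta> m + 2 \<Longrightarrow>
     gibbs_factor \<zeta> m = tree_weight m ^ 2 / ((real (\<eta> m) + 1) * (real (\<eta> m) + 2)) * gibbs_factor \<eta> m"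
  unfolding gibbs_factor_def by (simp add: field_simps power2_eq_square)

lemma gibbs_factor_down:
  assumes "\<zeta> m = \<eta> m - 1" "\<eta> m \<ge> 1" "m \<ge> 1"
  shows "gibbs_factor \<zeta> m = real (\<eta> m) / tree_weight m * gibbs_factor \<eta> m"
proof -
  have "gibbs_factor \<eta> m = tree_weight m / real (\<eta> m) * gibbs_factor \<zeta> m"
    using gibbs_factor_up[of \<eta> m \<zeta>] assms by simp
  then show ?thesis using assms tree_weight_pos[of m] by (simp add: field_simps)
qed

lemma gibbs_weight_local_change:
  assumes S: "S \<subseteq> {1..N}" and outside: "\<And>m. m \<notin> S \<Longrightarrow> \<zeta> m = \<eta> m"
    and local: "prod (gibbs_factor \<zeta>) S = R * prod (gibbs_factor \<eta>) S"
  shows "gibbs_weight N \<zeta> = R * gibbs_weight N \<eta>"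
proof -
  have "prod (gibbs_factor \<zeta>) ({1..N} - S) = prod (gibbs_factor \<eta>) ({1..N} - S)"
    using outside by (intro prod.cong) (auto simp: gibbs_factor_def)
  then show ?thesis
    unfolding gibbs_weight_def prod.subset_diff[OF S finite_atLeastAtMost] local by simp
qed

lemma gibbs_weight_unmerge_distinct:
  assumes ij: "(i, j) \<in> size_pairs N" "i \<noteq> j" and k: "\<eta> (i + j) \<ge> 1"
  shows "gibbs_weight N (unmerge \<eta> i j)
       = tree_weight i / (real (\<eta> i) + 1) * (tree_weight j / (real (\<eta> j) + 1))
         * (real (\<eta> (i + j)) / tree_weight (i + j)) * gibbs_weight N \<eta>"
proof (rule gibbs_weight_local_change[of "{i, j, i + j}"])
  have ij': "1 \<le> i" "1 \<le> j" "i + j \<le> N" using size_pairsD[OF ij(1)] by auto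
  then show "{i, j, i + j} \<subseteq> {1..N}" by auto
  show "unmerge \<eta> i j m = \<eta> m" if "m \<notin> {i, j, i + j}" for m
    using that by (simp add: unmerge_def)
  have "gibbs_factor (unmerge \<eta> i j) i = tree_weight i / (real (\<eta> i) + 1) * gibbs_factor \<eta> i"
       "gibbs_factor (unmerge \<eta> i j) j = tree_weight j / (real (\<eta> j) + 1) * gibbs_factor \<eta> j"
    by (rule gibbs_factor_up, use ij' ij(2) in \<open>simp add: unmerge_def\<close>)+
  moreover have "gibbs_factor (unmerge \<eta> i j) (i + j)
      = real (\<eta> (i + j)) / tree_weight (i + j) * gibbs_factor \<eta> (i + j)"
    by (rule gibbs_factor_down) (use ij' k in \<open>auto simp: unmerge_def\<close>)
  ultimately show "prod (gibbs_factor (unmerge \<eta> i j)) {i, j, i + j}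
      = tree_weight i / (real (\<eta> i) + 1) * (tree_weight j / (real (\<eta> j) + 1))
        * (real (\<eta> (i + j)) / tree_weight (i + j)) * prod (gibbs_factor \<eta>) {i, j, i + j}"
    using ij' ij(2) by (simp add: mult_ac)
qed

lemma gibbs_weight_unmerge_equal:
  assumes ii: "(i, i) \<in> size_pairs N" and k: "\<eta> (i + i) \<ge> 1"
  shows "gibbs_weight N (unmerge \<eta> i i)
       = tree_weight i ^ 2 / ((real (\<eta> i) + 1) * (real (\<eta> i) + 2))
         * (real (\<eta> (i + i)) / tree_weight (i + i)) * gibbs_weight N \<eta>"
proof (rule gibbs_weight_local_change[of "{i, i + i}"])
  have i': "1 \<le> i" "i + i \<le> N" using size_pairsD[OF ii] by auto
  then show "{i, i + i} \<subseteq> {1..N}" by auto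
  show "unmerge \<eta> i i m = \<eta> m" if "m \<notin> {i, i + i}" for m
    using that by (simp add: unmerge_def)
  have "gibbs_factor (unmerge \<eta> i i) i
      = tree_weight i ^ 2 / ((real (\<eta> i) + 1) * (real (\<eta> i) + 2)) * gibbs_factor \<eta> i"
    by (rule gibbs_factor_up2) (use i' in \<open>simp add: unmerge_def\<close>)
  moreover have "gibbs_factor (unmerge \<eta> i i) (i + i)
      = real (\<eta> (i + i)) / tree_weight (i + i) * gibbs_factor \<eta> (i + i)"
    by (rule gibbs_factor_down) (use i' k in \<open>auto simp: unmerge_def\<close>)
  ultimately show "prod (gibbs_factor (unmerge \<eta> i i)) {i, i + i}
      = tree_weight i ^ 2 / ((real (\<eta> i) + 1) * (real (\<eta> i) + 2))
        * (real (\<eta> (i + i)) / tree_weight (i + i)) * prod (gibbs_factor \<eta>) {i, i + i}"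
    using i' by simp
qed

definition merger_flux :: "(nat \<Rightarrow> nat \<Rightarrow> real) \<Rightarrow> nat \<Rightarrow> (nat \<Rightarrow> nat) \<Rightarrow> nat \<Rightarrow> nat \<Rightarrow> real" where
  "merger_flux \<psi> N \<eta> i j =
     \<psi> i j * real (\<eta> (i + j)) * tree_weight i * tree_weight j / tree_weight (i + j) * gibbs_weight N \<eta>"

text \<open>The rate from \<open>unmerge \<eta> i j\<close> into \<open>\<eta>\<close>, weighted with the Gibbs weight of the
  source, is the merger flux (halved on the diagonal), for every kernel: the combinatorial
  factors of the rate cancel against those of the weight.\<close>
lemma unmerge_flux:
  assumes ij: "(i, j) \<in> size_pairs N" and k: "\<eta> (i + j) \<ge> 1"
  shows "pair_rate \<psi> (unmerge \<eta> i j) i j * gibbs_weight N (unmerge \<eta> i j)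
       = (if i = j then merger_flux \<psi> N \<eta> i j / 2 else merger_flux \<psi> N \<eta> i j)"
proof -
  have ij': "1 \<le> i" "1 \<le> j" "i + j \<le> N" using size_pairsD[OF ij] by auto
  have tw: "tree_weight (i + j) > 0" by (rule tree_weight_pos) (use ij' in simp)
  show ?thesis
  proof (cases "i = j")
    case True
    define D where "D = (real (\<eta> i) + 1) * (real (\<eta> i) + 2)"
    have rate: "pair_rate \<psi> (unmerge \<eta> i j) i j = D / 2 * \<psi> i j"
      using ij' True by (simp add: pair_rate_def unmerge_def D_def algebra_simps)
    have weight: "gibbs_weight N (unmerge \<eta> i j)
        = tree_weight i ^ 2 / D * (real (\<eta> (i + j)) / tree_weight (i + j)) * gibbs_weight N \<eta>"
      using gibbs_weight_unmerge_equal[of i N \<eta>] ij k True unfolding D_def by simp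
    have "D \<noteq> 0" unfolding D_def by (simp add: add_pos_pos)
    then show ?thesis
      unfolding weight rate using True tw by (simp add: merger_flux_def field_simps power2_eq_square)
  next
    case False
    define Di where "Di = real (\<eta> i) + 1"
    define Dj where "Dj = real (\<eta> j) + 1"
    have rate: "pair_rate \<psi> (unmerge \<eta> i j) i j = Di * Dj * \<psi> i j"
      using ij' False by (simp add: pair_rate_def unmerge_def Di_def Dj_def algebra_simps)
    have weight: "gibbs_weight N (unmerge \<eta> i j)
        = tree_weight i / Di * (tree_weight j / Dj) * (real (\<eta> (i + j)) / tree_weight (i + j)) * gibbs_weight N \<eta>"
      using gibbs_weight_unmerge_distinct[of i j N \<eta>, OF ij False k] unfolding Di_def Dj_def .
    have "Di \<noteq> 0" "Dj \<noteq> 0" unfolding Di_def Dj_def by (simp_all add: add_pos_pos)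
    then show ?thesis
      unfolding weight rate using False tw by (simp add: merger_flux_def field_simps)
  qed
qed

text \<open>Under the additive kernel, the mergers of all pairs of clusters whose sizes add up to
  \<open>k\<close> carry the total flux \<open>2 v (k - 1) \<eta>\<^sub>k\<close> times the weight; this is where the tree
  weight convolution enters.\<close>
lemma merger_flux_additive_by_size:
  assumes k: "k \<ge> 1"
  shows "(\<Sum>i=1..k-1. merger_flux (\<lambda>i j. real (i + j) * v) N \<eta> i (k - i))
       = 2 * v * gibbs_weight N \<eta> * (real k - 1) * real (\<eta> k)"
proof -
  have "(\<Sum>i=1..k-1. merger_flux (\<lambda>i j. real (i + j) * v) N \<eta> i (k - i))
      = v * real k * real (\<eta> k) / tree_weight k * gibbs_weight N \<eta>
        * (\<Sum>i=1..k-1. tree_weight i * tree_weight (k - i))"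
    unfolding sum_distrib_left by (intro sum.cong refl) (auto simp: merger_flux_def)
  also have "\<dots> = 2 * v * gibbs_weight N \<eta> * (real k - 1) * real (\<eta> k)"
    unfolding tree_weight_convolution[OF k] using k tree_weight_pos[OF k]
    by (simp add: field_simps of_nat_diff)
  finally show ?thesis .
qed

lemma gibbs_inflow_additive:
  assumes \<eta>: "\<eta> \<in> Omega N"
  shows "(\<Sum>(i, j)\<in>size_pairs N. if \<eta> (i + j) \<ge> 1
            then pair_rate (\<lambda>i j. real (i + j) * v) (unmerge \<eta> i j) i j * gibbs_weight N (unmerge \<eta> i j)
            else 0)
       = v * (real N - real (num_clusters N \<eta>)) * gibbs_weight N \<eta>"
proof -
  let ?F = "merger_flux (\<lambda>i j. real (i + j) * v) N \<eta>"
  have vanish: "?F i j = 0" if "N < i + j" for i j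
    using Omega_outside[OF \<eta>, of "i + j"] that by (simp add: merger_flux_def)
  have sym: "?F i j = ?F j i" for i j
    unfolding merger_flux_def by (simp add: add.commute mult_ac)
  have "(\<Sum>(i, j)\<in>size_pairs N. if \<eta> (i + j) \<ge> 1
            then pair_rate (\<lambda>i j. real (i + j) * v) (unmerge \<eta> i j) i j * gibbs_weight N (unmerge \<eta> i j)
            else 0)
      = (\<Sum>(i, j)\<in>size_pairs N. if i = j then ?F i j / 2 else ?F i j)"
    using unmerge_flux by (intro sum.cong refl) (auto simp: merger_flux_def)
  also have "\<dots> = (\<Sum>k=1..N. \<Sum>i=1..k-1. ?F i (k - i)) / 2"
    by (simp only: sum_size_pairs_symmetric[OF sym vanish] sum_by_total_size[OF vanish])
  also have "\<dots> = (\<Sum>k=1..N. 2 * v * gibbs_weight N \<eta> * (real k - 1) * real (\<eta> k)) / 2"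
    using merger_flux_additive_by_size by (intro arg_cong[where f="\<lambda>x. x / 2"] sum.cong refl) simp
  also have "\<dots> = v * gibbs_weight N \<eta> * ((\<Sum>k=1..N. real k * real (\<eta> k)) - (\<Sum>k=1..N. real (\<eta> k)))"
    by (simp add: sum_distrib_left algebra_simps flip: sum_subtractf)
  also have "\<dots> = v * (real N - real (num_clusters N \<eta>)) * gibbs_weight N \<eta>"
    unfolding Omega_mass_real[OF \<eta>] num_clusters_def by simp
  finally show ?thesis .
qed

definition time_factor :: "real \<Rightarrow> nat \<Rightarrow> nat \<Rightarrow> real \<Rightarrow> real" where
  "time_factor v N r t = fact N * exp (- real N * real (r - 1) * v * t)
      * (1 - exp (- real N * v * t)) ^ (N - r) / real N ^ (N - r)"

definition gibbs_law :: "real \<Rightarrow> nat \<Rightarrow> real \<Rightarrow> (nat \<Rightarrow> nat) \<Rightarrow> real" where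
  "gibbs_law v N t \<eta> = time_factor v N (num_clusters N \<eta>) t * gibbs_weight N \<eta>"

lemma time_factor_derivative:
  assumes N: "N \<ge> 1" and r: "1 \<le> r" "r \<le> N"
  shows "(time_factor v N r has_real_derivative
            - v * real N * (real r - 1) * time_factor v N r t + v * (real N - real r) * time_factor v N (r + 1) t) (at t)"
proof -
  define m where "m = N - r"
  define C where "C = fact N / real N ^ m"
  define A where "A = - real N * real (r - 1) * v"
  define B where "B = - real N * v"
  have tf: "time_factor v N r = (\<lambda>s. C * (exp (A * s) * (1 - exp (B * s)) ^ m))"
    unfolding time_factor_def C_def A_def B_def m_def by (auto simp: field_simps)
  have "(time_factor v N r has_real_derivative
      C * (exp (A * t) * A * (1 - exp (B * t)) ^ m
           + exp (A * t) * (real m * (1 - exp (B * t)) ^ (m - 1) * (- B * exp (B * t))))) (at t)"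
    unfolding tf by (auto intro!: derivative_eq_intros simp: algebra_simps)
  moreover have "C * (exp (A * t) * A * (1 - exp (B * t)) ^ m
           + exp (A * t) * (real m * (1 - exp (B * t)) ^ (m - 1) * (- B * exp (B * t))))
      = - v * real N * (real r - 1) * time_factor v N r t + v * (real N - real r) * time_factor v N (r + 1) t"
  proof (cases m)
    case 0
    then show ?thesis using r unfolding m_def C_def A_def time_factor_def by (simp add: of_nat_diff)
  next
    case (Suc m')
    define X where "X = exp (A * t)"
    define E where "E = exp (B * t)"
    have at_r: "time_factor v N r t = C * (X * (1 - E) ^ m)"
      unfolding tf X_def E_def ..
    have "exp (- real N * real r * v * t) = X * E"
      unfolding X_def E_def A_def B_def using r by (simp add: of_nat_diff algebra_simps flip: exp_add)
    moreover have "N - (r + 1) = m'"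
      using Suc unfolding m_def by simp
    ultimately have at_succ: "time_factor v N (r + 1) t = fact N * (X * E) * (1 - E) ^ m' / real N ^ m'"
      unfolding time_factor_def E_def B_def by simp
    have diff: "real N - real r = real (Suc m')"
      using Suc r unfolding m_def by (simp add: of_nat_diff)
    have loss: "C * (X * A * (1 - E) ^ m) = - v * real N * (real r - 1) * (C * (X * (1 - E) ^ m))"
      unfolding A_def using r by (simp add: of_nat_diff)
    have gain: "C * (X * (real m * (1 - E) ^ (m - 1) * (- B * E)))
        = v * real (Suc m') * (fact N * (X * E) * (1 - E) ^ m' / real N ^ m')"
      unfolding C_def B_def Suc using N by (simp add: field_simps)
    show ?thesis
      unfolding at_r at_succ diff X_def[symmetric] E_def[symmetric] distrib_left loss gain ..
  qed
  ultimately show ?thesis by simp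
qed

lemma gibbs_law_forward_equation:
  assumes N: "N \<ge> 1" and \<eta>: "\<eta> \<in> Omega N"
  shows "((\<lambda>s. gibbs_law v N s \<eta>) has_real_derivative
           (\<Sum>\<xi>\<in>Omega N. gibbs_law v N t \<xi> * generator (\<lambda>i j. real (i + j) * v) N \<xi> \<eta>)) (at t)"
proof -
  define r where "r = num_clusters N \<eta>"
  have r: "1 \<le> r" "r \<le> N" unfolding r_def using num_clusters_pos[OF \<eta> N] num_clusters_le[OF \<eta>] by auto
  have "(\<Sum>(i, j)\<in>size_pairs N. if \<eta> (i + j) \<ge> 1
          then gibbs_law v N t (unmerge \<eta> i j) * pair_rate (\<lambda>i j. real (i + j) * v) (unmerge \<eta> i j) i j else 0)
      = time_factor v N (r + 1) t * (\<Sum>(i, j)\<in>size_pairs N. if \<eta> (i + j) \<ge> 1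
          then pair_rate (\<lambda>i j. real (i + j) * v) (unmerge \<eta> i j) i j * gibbs_weight N (unmerge \<eta> i j) else 0)"
    unfolding sum_distrib_left using unmerge_state(2)[OF \<eta>]
    by (intro sum.cong refl) (auto simp: gibbs_law_def r_def)
  also have "\<dots> = time_factor v N (r + 1) t * (v * (real N - real r) * gibbs_weight N \<eta>)"
    unfolding gibbs_inflow_additive[OF \<eta>] r_def ..
  finally have "(\<Sum>\<xi>\<in>Omega N. gibbs_law v N t \<xi> * generator (\<lambda>i j. real (i + j) * v) N \<xi> \<eta>)
      = (- v * real N * (real r - 1) * time_factor v N r t + v * (real N - real r) * time_factor v N (r + 1) t)
        * gibbs_weight N \<eta>"
    unfolding forward_sum[OF \<eta>] total_pair_rate_additive[OF \<eta>]
    by (simp add: gibbs_law_def r_def algebra_simps)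
  then show ?thesis
    unfolding gibbs_law_def r_def[symmetric]
    by (simp only:) (intro DERIV_cmult_right time_factor_derivative N r)
qed

lemma gibbs_law_initial:
  assumes N: "N \<ge> 1" and \<eta>: "\<eta> \<in> Omega N"
  shows "gibbs_law v N 0 \<eta> = (if \<eta> = monodisperse N then 1 else 0)"
proof (cases "\<eta> = monodisperse N")
  case True
  have "gibbs_weight N (monodisperse N) = (\<Prod>m=1..N. if m = 1 then 1 / fact N else 1)"
    unfolding gibbs_weight_def gibbs_factor_def monodisperse_def tree_weight_def
    by (intro prod.cong refl) simp
  also have "\<dots> = 1 / fact N"
    using N by (simp add: prod.delta)
  finally show ?thesis
    using True num_clusters_eq_N_iff[OF \<eta>] by (simp add: gibbs_law_def time_factor_def)
next
  case False
  then have "num_clusters N \<eta> < N"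
    using num_clusters_eq_N_iff[OF \<eta>] num_clusters_le[OF \<eta>] by simp
  then show ?thesis
    using False by (simp add: gibbs_law_def time_factor_def)
qed

lemma gibbs_weight_explicit:
  "gibbs_weight N \<eta> = (\<Prod>k=1..N. real k ^ ((k - 1) * \<eta> k) / (fact k ^ \<eta> k * fact (\<eta> k)))"
  unfolding gibbs_weight_def gibbs_factor_def tree_weight_def
  by (intro prod.cong refl) (simp add: power_divide power_mult)

theorem mainTheorem4:
  fixes v :: real and N :: nat and p :: "real \<Rightarrow> (nat \<Rightarrow> nat) \<Rightarrow> real"
  assumes "v > 0" and "N \<ge> 1"
    and "is_law (\<lambda>i j. real (i + j) * v) N (monodisperse N) p"
  shows "\<forall>t\<ge>0. \<forall>r\<in>{1..N}. \<forall>\<eta>\<in>Omega_r r N.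
           p t \<eta> = fact N * exp (- real N * real (r - 1) * v * t)
                     * (1 - exp (- real N * v * t)) ^ (N - r) / real N ^ (N - r)
                     * (\<Prod>k=1..N. real k ^ ((k - 1) * \<eta> k) / (fact k ^ \<eta> k * fact (\<eta> k)))"
proof (intro allI impI ballI)
  fix t :: real and r \<eta> assume t: "t \<ge> 0" and "r \<in> {1..N}" and \<eta>: "\<eta> \<in> Omega_r r N"
  have \<eta>\<Omega>: "\<eta> \<in> Omega N" and r: "num_clusters N \<eta> = r"
    using \<eta> unfolding Omega_r_def num_clusters_def by auto
  have "\<forall>t\<ge>0. \<forall>\<eta>\<in>Omega N. p t \<eta> = gibbs_law v N t \<eta>"
  proof (rule linear_ode_unique[OF finite_Omega])
    show "\<forall>\<eta>\<in>Omega N. p 0 \<eta> = gibbs_law v N 0 \<eta>"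
      using assms(3) gibbs_law_initial[OF assms(2)] unfolding is_law_def by simp
    show "\<forall>\<eta>\<in>Omega N. \<forall>t\<ge>0. ((\<lambda>s. p s \<eta>) has_real_derivative
        (\<Sum>\<xi>\<in>Omega N. p t \<xi> * generator (\<lambda>i j. real (i + j) * v) N \<xi> \<eta>)) (at t within {0..})"
      using assms(3) unfolding is_law_def by blast
    show "\<forall>\<eta>\<in>Omega N. \<forall>t\<ge>0. ((\<lambda>s. gibbs_law v N s \<eta>) has_real_derivative
        (\<Sum>\<xi>\<in>Omega N. gibbs_law v N t \<xi> * generator (\<lambda>i j. real (i + j) * v) N \<xi> \<eta>)) (at t within {0..})"
      using gibbs_law_forward_equation[OF assms(2)] by (blast intro: has_field_derivative_at_within)
  qed
  then have "p t \<eta> = gibbs_law v N t \<eta>" using t \<eta>\<Omega> by blast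
  then show "p t \<eta> = fact N * exp (- real N * real (r - 1) * v * t)
                     * (1 - exp (- real N * v * t)) ^ (N - r) / real N ^ (N - r)
                     * (\<Prod>k=1..N. real k ^ ((k - 1) * \<eta> k) / (fact k ^ \<eta> k * fact (\<eta> k)))"
    unfolding gibbs_law_def time_factor_def r gibbs_weight_explicit .
qed

end
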